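(* Let $C\subseteq\mathbb R^n$ be a convex body, $x\in\mathbb R^n$ and $R>0$ with $C\subseteq x+RB_2^n$. Then $|C|\le(n+1)\,\omega_{n-1}R^{n-1}r(C)$.
   Context: $r(C)$ (the inradius) is the maximal radius of a Euclidean ball contained in $C$; $\omega_{n-1}$ is the volume of the $(n-1)$-dimensional Euclidean unit ball; $B_2^n$ the Euclidean unit ball. *)

theory Defs
  imports "HOL-Analysis.Analysis"
begin

definition convex_body :: "'a::euclidean_space set \<Rightarrow> bool" where
  "convex_body C \<longleftrightarrow> compact C \<and> convex C \<and> interior C \<noteq> {}"

definition inradius :: "'a::euclidean_space set \<Rightarrow> real" where
  "inradius C = Sup {r. 0 \<le> r \<and> (\<exists>y. cball y r \<subseteq> C)}"

end

theory Submission
  imports Defs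
begin

(* Let B(c, r) be a largest ball contained in C and call a unit vector u a contact direction
   if u \<bullet> c + r equals the support function h_C(u).  If 0 were not in the convex hull of the
   contact directions, a hyperplane would separate it from them, and shifting the ball slightly
   along the separating normal would leave room for a larger ball.  By Caratheodory, 0 is a
   convex combination of at most n + 1 contact directions; the one of largest weight
   (at least 1/(n + 1)) is a direction u with -n r \<le> u \<bullet> (y - c) \<le> r on C.  So C lies in a
   slab of width (n + 1) r, whose intersection with x + R B has volume at most
   (n + 1) r \<omega>_(n-1) R^(n-1): after a rotation taking u to a coordinate vector it is contained
   in a cylinder. *)

section \<open>Coordinates and orthogonal invariance of Lebesgue measure\<close>

(* Invariance of Lebesgue measure under orthogonal maps is available in the library only on
   real ^ 'n with a well-ordered index type.  The type 'a basis_index, a copy of Basis, is such an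
   index type with DIM('a) elements, and the coordinate maps below transport the fact to an
   arbitrary euclidean_space. *)
typedef (overloaded) ('a::euclidean_space) basis_index = "Basis :: 'a set"
  using nonempty_Basis by blast

lemma bij_betw_Rep_basis_index: "bij_betw Rep_basis_index UNIV (Basis :: 'a::euclidean_space set)"
  by (metis Rep_basis_index_inject bij_betw_def inj_onI type_definition.Rep_range
      type_definition_basis_index)

instance basis_index :: (euclidean_space) finite
  by standard (metis bij_betw_Rep_basis_index bij_betw_finite finite_Basis)

instantiation basis_index :: (euclidean_space) linorder
begin

definition less_eq_basis_index :: "'a basis_index \<Rightarrow> 'a basis_index \<Rightarrow> bool" where
  "less_eq_basis_index i j \<longleftrightarrow> to_nat_on (UNIV :: 'a basis_index set) i \<le> to_nat_on UNIV j"

definition less_basis_index :: "'a basis_index \<Rightarrow> 'a basis_index \<Rightarrow> bool" where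
  "less_basis_index i j \<longleftrightarrow> to_nat_on (UNIV :: 'a basis_index set) i < to_nat_on UNIV j"

instance
proof
  have inj: "inj (to_nat_on (UNIV :: 'a basis_index set))"
    by (simp add: countable_finite inj_on_to_nat_on)
  fix i j k :: "'a basis_index"
  show "i < j \<longleftrightarrow> i \<le> j \<and> \<not> j \<le> i"
    by (auto simp: less_eq_basis_index_def less_basis_index_def)
  show "i \<le> i" by (simp add: less_eq_basis_index_def)
  show "i \<le> j \<Longrightarrow> j \<le> k \<Longrightarrow> i \<le> k" by (simp add: less_eq_basis_index_def)
  show "i \<le> j \<Longrightarrow> j \<le> i \<Longrightarrow> i = j"
    using inj by (simp add: less_eq_basis_index_def inj_eq)
  show "i \<le> j \<or> j \<le> i" by (auto simp: less_eq_basis_index_def)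
qed

end

instance basis_index :: (euclidean_space) wellorder
proof
  fix P :: "'a basis_index \<Rightarrow> bool" and i
  assume step: "\<And>i. (\<And>j. j < i \<Longrightarrow> P j) \<Longrightarrow> P i"
  show "P i"
    by (induct i rule: measure_induct_rule[where f = "to_nat_on (UNIV :: 'a basis_index set)"])
       (rule step, simp add: less_basis_index_def)
qed

lemma sum_basis_index:
  "(\<Sum>i\<in>UNIV. f (Rep_basis_index i)) = (\<Sum>b\<in>(Basis :: 'a::euclidean_space set). f b)"
  using sum.reindex_bij_betw[OF bij_betw_Rep_basis_index] .

lemma prod_basis_index:
  "(\<Prod>i\<in>UNIV. f (Rep_basis_index i)) = (\<Prod>b\<in>(Basis :: 'a::euclidean_space set). f b)"
  using prod.reindex_bij_betw[OF bij_betw_Rep_basis_index] .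

definition coords :: "'a::euclidean_space \<Rightarrow> real ^ 'a basis_index" where
  "coords x = (\<chi> i. x \<bullet> Rep_basis_index i)"

definition from_coords :: "real ^ 'a basis_index \<Rightarrow> 'a::euclidean_space" where
  "from_coords z = (\<Sum>i\<in>UNIV. z $ i *\<^sub>R Rep_basis_index i)"

lemma coords_nth [simp]: "coords x $ i = x \<bullet> Rep_basis_index i"
  by (simp add: coords_def)

lemma from_coords_inner_Rep: "from_coords z \<bullet> Rep_basis_index j = z $ j"
proof -
  have "from_coords z \<bullet> Rep_basis_index j
      = (\<Sum>i\<in>UNIV. z $ i * (Rep_basis_index i \<bullet> Rep_basis_index j))"
    by (simp add: from_coords_def inner_sum_left)
  also have "\<dots> = (\<Sum>i\<in>UNIV. if i = j then z $ i else 0)"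
    by (intro sum.cong refl) (auto simp: inner_Basis Rep_basis_index Rep_basis_index_inject)
  finally show ?thesis by simp
qed

lemma coords_from_coords [simp]: "coords (from_coords z) = z"
  by (simp add: vec_eq_iff from_coords_inner_Rep)

lemma from_coords_coords [simp]: "from_coords (coords x) = x"
  using sum_basis_index[of "\<lambda>b. (x \<bullet> b) *\<^sub>R b"]
  by (simp add: from_coords_def euclidean_representation)

lemma linear_coords: "linear coords"
  by (rule linearI) (simp_all add: vec_eq_iff inner_add_left)

lemma linear_from_coords: "linear from_coords"
  by (rule linearI) (simp_all add: from_coords_def algebra_simps sum.distrib scaleR_sum_right)

lemma inner_coords: "coords x \<bullet> coords y = x \<bullet> y"
  using sum_basis_index[of "\<lambda>b. (x \<bullet> b) * (y \<bullet> b)"]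
  by (simp add: inner_vec_def euclidean_inner[of x y])

lemma inner_from_coords: "from_coords z \<bullet> from_coords w = z \<bullet> w"
  by (metis coords_from_coords inner_coords)

lemma compact_linear_image:
  fixes f :: "'a::euclidean_space \<Rightarrow> 'b::real_normed_vector"
  assumes "linear f" "compact S"
  shows "compact (f ` S)"
  using assms by (intro compact_continuous_image linear_continuous_on) (simp add: linear_conv_bounded_linear)

lemma coords_measurable [measurable]: "coords \<in> borel_measurable borel"
  by (intro borel_measurable_continuous_onI linear_continuous_on
      linear_coords[THEN linear_conv_bounded_linear[THEN iffD1]])

lemma from_coords_measurable [measurable]: "from_coords \<in> borel_measurable borel"
  by (intro borel_measurable_continuous_onI linear_continuous_on
      linear_from_coords[THEN linear_conv_bounded_linear[THEN iffD1]])

lemma lborel_distr_coords: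
  "distr lborel borel coords = (lborel :: (real ^ 'a::euclidean_space basis_index) measure)"
proof (rule lborel_eqI[symmetric])
  fix l u :: "real ^ 'a basis_index"
  assume le: "\<And>b. b \<in> Basis \<Longrightarrow> l \<bullet> b \<le> u \<bullet> b"
  have le_nth: "l $ i \<le> u $ i" for i
    using le[of "axis i 1"] by (auto simp: Basis_vec_def inner_axis)
  have mem_box_from_coords: "y \<in> box (from_coords l) (from_coords u) \<longleftrightarrow>
      (\<forall>i. l $ i < y \<bullet> Rep_basis_index i \<and> y \<bullet> Rep_basis_index i < u $ i)" for y :: 'a
    unfolding mem_box from_coords_inner_Rep[symmetric]
    by (metis Rep_basis_index Rep_basis_index_cases)
  have "coords -` box l u = box (from_coords l) (from_coords u)"
    by (auto simp: mem_box_cart mem_box_from_coords)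
  then have "emeasure (distr lborel borel coords) (box l u)
      = emeasure lborel (box (from_coords l) (from_coords u))"
    by (subst emeasure_distr) auto
  also have "\<dots> = (\<Prod>b\<in>Basis. (from_coords u - from_coords l) \<bullet> b)"
    using le_nth
    by (subst emeasure_lborel_box_eq)
       (auto intro!: prod_nonneg simp: inner_diff_left, metis Rep_basis_index_cases from_coords_inner_Rep)
  also have "\<dots> = (\<Prod>i\<in>UNIV. (u - l) $ i)"
    by (simp flip: prod_basis_index add: inner_diff_left from_coords_inner_Rep)
  also have "\<dots> = (\<Prod>b\<in>range (\<lambda>i. axis i 1). (u - l) \<bullet> b)"
    by (simp add: prod.reindex inj_on_def axis_eq_axis inner_axis)
  also have "range (\<lambda>i. axis i 1) = (Basis :: (real ^ 'a basis_index) set)"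
    by (auto simp: Basis_vec_def)
  finally show "emeasure (distr lborel borel coords) (box l u) = (\<Prod>b\<in>Basis. (u - l) \<bullet> b)" .
qed simp

lemma lborel_distr_from_coords:
  "distr lborel borel from_coords = (lborel :: 'a::euclidean_space measure)"
proof -
  have "distr lborel borel from_coords = distr (distr lborel borel coords) borel (from_coords :: _ \<Rightarrow> 'a)"
    by (simp add: lborel_distr_coords)
  also have "\<dots> = distr lborel borel (from_coords \<circ> coords)"
    by (rule distr_distr) simp_all
  also have "\<dots> = lborel"
    by (simp add: o_def distr_id2)
  finally show ?thesis .
qed

lemma measure_coords_image:
  fixes K :: "'a::euclidean_space set"
  assumes "compact K"
  shows "measure lebesgue (coords ` K) = measure lebesgue K"
proof -
  have "coords ` K = from_coords -` K"
    by (auto simp: image_iff) (metis coords_from_coords)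
  moreover have "compact (coords ` K)"
    using assms by (rule compact_linear_image[OF linear_coords])
  ultimately show ?thesis
    using assms measure_distr[of from_coords lborel borel K]
    by (simp add: lborel_distr_from_coords borel_compact)
qed

lemma measure_orthogonal_image_euclidean:
  fixes f :: "'a::euclidean_space \<Rightarrow> 'a"
  assumes f: "orthogonal_transformation f" and S: "compact S"
  shows "measure lebesgue (f ` S) = measure lebesgue S"
proof -
  define g where "g = coords \<circ> f \<circ> from_coords"
  have "orthogonal_transformation g"
    using f unfolding orthogonal_transformation_def g_def
    by (auto intro!: linear_compose linear_coords linear_from_coords simp: inner_coords inner_from_coords)
  moreover have "compact (coords ` S)"
    using S by (rule compact_linear_image[OF linear_coords])
  moreover have "coords ` f ` S = g ` coords ` S"
    by (simp add: g_def image_comp)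
  moreover have "compact (f ` S)"
    using S f by (intro compact_linear_image orthogonal_transformation_linear)
  ultimately show ?thesis
    using S by (metis measure_coords_image measure_orthogonal_image lmeasurable_compact)
qed

lemma orthogonal_transformation_exists_euclidean:
  fixes a b :: "'a::euclidean_space"
  assumes "norm a = norm b"
  obtains f where "orthogonal_transformation f" "f a = b"
proof -
  have "norm (coords a) = norm (coords b)"
    using assms by (simp add: norm_eq_sqrt_inner inner_coords)
  then obtain g where g: "orthogonal_transformation g" "g (coords a) = coords b"
    using orthogonal_transformation_exists by metis
  show thesis
  proof
    show "orthogonal_transformation (from_coords \<circ> g \<circ> coords)"
      using g(1) unfolding orthogonal_transformation_def
      by (auto intro!: linear_compose linear_coords linear_from_coords simp: inner_coords inner_from_coords)
    show "(from_coords \<circ> g \<circ> coords) a = b"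
      using g(2) by simp
  qed
qed

section \<open>Volume of a slab inside a ball\<close>

lemma emeasure_PiM_cylinder:
  fixes B :: "'i set"
  assumes B: "finite B" "b \<notin> B" and "a \<le> a'" "R > 0"
  shows "emeasure (\<Pi>\<^sub>M i\<in>insert b B. lborel)
           ({f. a \<le> f b \<and> f b \<le> a' \<and> sqrt (\<Sum>i\<in>B. (f i)\<^sup>2) \<le> R} \<inter> space (\<Pi>\<^sub>M i\<in>insert b B. lborel))
         = ennreal ((a' - a) * unit_ball_vol (real (card B)) * R ^ card B)"
proof -
  interpret product_sigma_finite "\<lambda>_. lborel :: real measure" by standard
  let ?Z = "{f. a \<le> f b \<and> f b \<le> a' \<and> sqrt (\<Sum>i\<in>B. (f i)\<^sup>2) \<le> R} \<inter> space (\<Pi>\<^sub>M i\<in>insert b B. lborel)"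
  let ?D = "{f. sqrt (\<Sum>i\<in>B. (f i)\<^sup>2) \<le> R} \<inter> space (\<Pi>\<^sub>M i\<in>B. lborel)"
  have slice: "indicator ?Z (f(b := y)) = (indicator {a..a'} y * indicator ?D f :: ennreal)"
    if "f \<in> space (\<Pi>\<^sub>M i\<in>B. lborel)" for f and y :: real
  proof -
    have "(\<Sum>i\<in>B. ((f(b := y)) i)\<^sup>2) = (\<Sum>i\<in>B. (f i)\<^sup>2)"
      using B by (intro sum.cong) auto
    then show ?thesis
      using that by (auto simp: indicator_def space_PiM PiE_def extensional_def)
  qed
  have "emeasure (\<Pi>\<^sub>M i\<in>insert b B. lborel) ?Z = (\<integral>\<^sup>+ f. indicator ?Z f \<partial>(\<Pi>\<^sub>M i\<in>insert b B. lborel))"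
    by (subst nn_integral_indicator) auto
  also have "\<dots> = (\<integral>\<^sup>+ y. \<integral>\<^sup>+ f. indicator ?Z (f(b := y)) \<partial>(\<Pi>\<^sub>M i\<in>B. lborel) \<partial>lborel)"
    using B by (subst product_nn_integral_insert_rev) auto
  also have "\<dots> = (\<integral>\<^sup>+ y. indicator {a..a'} y * emeasure (\<Pi>\<^sub>M i\<in>B. lborel) ?D \<partial>lborel)"
    by (intro nn_integral_cong) (simp add: slice nn_integral_cmult cong: nn_integral_cong)
  also have "\<dots> = (\<integral>\<^sup>+ y. ennreal (unit_ball_vol (real (card B)) * R ^ card B) * indicator {a..a'} y \<partial>lborel)"
    using B assms by (simp add: emeasure_cball_aux mult.commute)
  also have "\<dots> = ennreal (unit_ball_vol (real (card B)) * R ^ card B) * emeasure lborel {a..a'}"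
    by (rule nn_integral_cmult_indicator) simp
  also have "\<dots> = ennreal ((a' - a) * unit_ball_vol (real (card B)) * R ^ card B)"
    using assms by (simp add: ennreal_mult' mult_ac)
  finally show ?thesis .
qed

lemma emeasure_cylinder:
  fixes b :: "'a::euclidean_space"
  assumes b: "b \<in> Basis" and "a \<le> a'" "R > 0"
  shows "emeasure lborel {y::'a. a \<le> y \<bullet> b \<and> y \<bullet> b \<le> a' \<and> sqrt (\<Sum>i\<in>Basis - {b}. (y \<bullet> i)\<^sup>2) \<le> R}
       = ennreal ((a' - a) * unit_ball_vol (real (DIM('a) - 1)) * R ^ (DIM('a) - 1))"
proof -
  let ?Z = "{y::'a. a \<le> y \<bullet> b \<and> y \<bullet> b \<le> a' \<and> sqrt (\<Sum>i\<in>Basis - {b}. (y \<bullet> i)\<^sup>2) \<le> R}"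
  let ?M = "\<Pi>\<^sub>M i\<in>insert b (Basis - {b}). (lborel :: real measure)"
  have coord: "(\<Sum>j\<in>Basis. f j *\<^sub>R j) \<bullet> i = f i" if "i \<in> Basis" for f :: "'a \<Rightarrow> real" and i
    using that by (simp add: inner_sum_left inner_Basis if_distrib cong: if_cong)
  have coord_sum: "(\<Sum>i\<in>Basis - {b}. ((\<Sum>j\<in>Basis. f j *\<^sub>R j) \<bullet> i)\<^sup>2) = (\<Sum>i\<in>Basis - {b}. (f i)\<^sup>2)"
    for f :: "'a \<Rightarrow> real"
    by (intro sum.cong) (auto simp: coord)
  have "emeasure lborel ?Z = emeasure (distr (\<Pi>\<^sub>M i\<in>Basis. lborel) borel (\<lambda>f. \<Sum>j\<in>Basis. f j *\<^sub>R j)) ?Z"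
    by (simp flip: lborel_eq)
  also have "\<dots> = emeasure ?M ({f. a \<le> f b \<and> f b \<le> a' \<and> sqrt (\<Sum>i\<in>Basis - {b}. (f i)\<^sup>2) \<le> R} \<inter> space ?M)"
    using b by (subst emeasure_distr) (auto simp: coord coord_sum insert_absorb)
  also have "\<dots> = ennreal ((a' - a) * unit_ball_vol (real (card (Basis - {b}))) * R ^ card (Basis - {b}))"
    using assms by (intro emeasure_PiM_cylinder) auto
  finally show ?thesis
    using b by (simp add: card_Diff_singleton)
qed

lemma sqrt_sum_inner_Basis_diff_le_norm:
  fixes z :: "'a::euclidean_space"
  shows "sqrt (\<Sum>i\<in>Basis - {b}. (z \<bullet> i)\<^sup>2) \<le> norm z"
proof -
  have "(\<Sum>i\<in>Basis - {b}. (z \<bullet> i)\<^sup>2) \<le> (\<Sum>i\<in>Basis. (z \<bullet> i)\<^sup>2)"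
    by (intro sum_mono2) auto
  also have "\<dots> = z \<bullet> z"
    by (simp add: euclidean_inner[of z z] power2_eq_square)
  also have "\<dots> = (norm z)\<^sup>2"
    by (simp add: power2_norm_eq_inner)
  finally show ?thesis
    by (rule real_le_lsqrt[OF norm_ge_zero])
qed

lemma measure_slab_cball_le:
  fixes u x :: "'a::euclidean_space"
  assumes u: "norm u = 1" and "a \<le> a'" "R > 0"
  shows "measure lebesgue ({y. a \<le> u \<bullet> y \<and> u \<bullet> y \<le> a'} \<inter> cball x R)
           \<le> (a' - a) * unit_ball_vol (real (DIM('a) - 1)) * R ^ (DIM('a) - 1)"
proof -
  obtain b :: 'a where b: "b \<in> Basis"
    using nonempty_Basis by blast
  obtain f where f: "orthogonal_transformation f" "f u = b"
    using orthogonal_transformation_exists_euclidean[of u b] u b by auto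
  define S where "S = {y. a - u \<bullet> x \<le> u \<bullet> y \<and> u \<bullet> y \<le> a' - u \<bullet> x} \<inter> cball 0 R"
  define Z where "Z = {z::'a. a - u \<bullet> x \<le> z \<bullet> b \<and> z \<bullet> b \<le> a' - u \<bullet> x \<and> sqrt (\<Sum>i\<in>Basis - {b}. (z \<bullet> i)\<^sup>2) \<le> R}"
  have S: "compact S"
    unfolding S_def by (intro closed_Int_compact closed_Collect_conj closed_Collect_le continuous_intros compact_cball)
  have translate: "{y. a \<le> u \<bullet> y \<and> u \<bullet> y \<le> a'} \<inter> cball x R = (+) x ` S"
  proof (intro set_eqI iffI)
    fix y assume "y \<in> {y. a \<le> u \<bullet> y \<and> u \<bullet> y \<le> a'} \<inter> cball x R"
    then have "y - x \<in> S"
      by (auto simp: S_def inner_diff_right dist_norm norm_minus_commute)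
    then show "y \<in> (+) x ` S"
      by (rule rev_image_eqI) simp
  qed (auto simp: S_def inner_add_right dist_norm)
  have "f ` S \<subseteq> Z"
  proof
    fix z assume "z \<in> f ` S"
    then obtain y where y: "y \<in> S" "z = f y" by blast
    have "z \<bullet> b = u \<bullet> y"
      using f y(2) by (metis inner_commute orthogonal_transformation_def)
    moreover have "norm z = norm y"
      using f y(2) by (simp add: orthogonal_transformation_norm)
    ultimately show "z \<in> Z"
      using y(1) sqrt_sum_inner_Basis_diff_le_norm[of z b] by (auto simp: S_def Z_def)
  qed
  moreover have "emeasure lborel Z = ennreal ((a' - a) * unit_ball_vol (real (DIM('a) - 1)) * R ^ (DIM('a) - 1))"
    unfolding Z_def using emeasure_cylinder[OF b _ \<open>R > 0\<close>, of "a - u \<bullet> x" "a' - u \<bullet> x"] assms by simp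
  moreover have "Z \<in> sets borel"
    unfolding Z_def by measurable
  moreover have "compact (f ` S)"
    using S f by (intro compact_linear_image orthogonal_transformation_linear)
  ultimately have "measure lebesgue (f ` S) \<le> (a' - a) * unit_ball_vol (real (DIM('a) - 1)) * R ^ (DIM('a) - 1)"
    using assms measure_mono_fmeasurable[of "f ` S" Z lebesgue]
    by (simp add: fmeasurable_def borel_compact measure_def)
  then show ?thesis
    by (simp add: translate measure_translation measure_orthogonal_image_euclidean[OF f(1) S])
qed

section \<open>Support function and largest inscribed balls\<close>

definition support_function :: "'a::euclidean_space set \<Rightarrow> 'a \<Rightarrow> real" where
  "support_function C u = (SUP y\<in>C. u \<bullet> y)"

lemma support_function_upper:
  assumes "compact C" "y \<in> C"
  shows "u \<bullet> y \<le> support_function C u"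
proof -
  have "bounded ((\<bullet>) u ` C)"
    using assms(1) by (intro compact_imp_bounded compact_continuous_image continuous_intros)
  then show ?thesis
    unfolding support_function_def using assms(2) by (intro cSup_upper bounded_imp_bdd_above) auto
qed

lemma support_function_least:
  assumes "C \<noteq> {}" "\<And>y. y \<in> C \<Longrightarrow> u \<bullet> y \<le> m"
  shows "support_function C u \<le> m"
  unfolding support_function_def using assms by (intro cSup_least) auto

lemma support_function_attained:
  assumes "compact C" "C \<noteq> {}"
  obtains y where "y \<in> C" "support_function C u = u \<bullet> y"
proof -
  obtain y where y: "y \<in> C" "\<And>z. z \<in> C \<Longrightarrow> u \<bullet> z \<le> u \<bullet> y"
    using continuous_attains_sup[OF assms continuous_on_inner[OF continuous_on_const continuous_on_id]]
    by blast
  then have "support_function C u = u \<bullet> y"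
    by (intro antisym support_function_least support_function_upper assms) auto
  with y(1) show thesis by (rule that)
qed

lemma lipschitz_on_support_function:
  assumes C: "compact C" "C \<noteq> {}" and M: "\<And>y. y \<in> C \<Longrightarrow> norm y \<le> M"
  shows "M-lipschitz_on UNIV (support_function C)"
proof (rule lipschitz_onI)
  have one_sided: "support_function C u \<le> support_function C v + M * norm (u - v)" for u v
  proof -
    obtain y where y: "y \<in> C" "support_function C u = u \<bullet> y"
      using support_function_attained[OF C] by blast
    have "u \<bullet> y = v \<bullet> y + (u - v) \<bullet> y"
      by (simp add: inner_diff_left)
    also have "(u - v) \<bullet> y \<le> norm (u - v) * M"
      using norm_cauchy_schwarz[of "u - v" y] M[OF y(1)] by (meson mult_left_mono norm_ge_zero order_trans)
    finally show ?thesis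
      using support_function_upper[OF C(1) y(1), of v] y(2) by (simp add: mult.commute)
  qed
  fix u v :: 'a
  show "dist (support_function C u) (support_function C v) \<le> M * dist u v"
    using one_sided[of u v] one_sided[of v u] by (simp add: dist_real_def dist_norm norm_minus_commute abs_le_iff)
  show "0 \<le> M"
    using C(2) M norm_ge_zero order_trans by blast
qed

lemma continuous_on_support_function:
  assumes "compact C" "C \<noteq> {}"
  shows "continuous_on UNIV (support_function C)"
proof -
  obtain M where "\<And>y. y \<in> C \<Longrightarrow> norm y \<le> M"
    using compact_imp_bounded[OF assms(1)] by (meson bounded_pos)
  then show ?thesis
    by (intro lipschitz_on_continuous_on lipschitz_on_support_function assms)
qed

lemma cball_subset_iff_support_function:
  assumes "compact C" "convex C" "C \<noteq> {}" "0 \<le> s"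
  shows "cball c s \<subseteq> C \<longleftrightarrow> (\<forall>u. norm u = 1 \<longrightarrow> u \<bullet> c + s \<le> support_function C u)"
proof
  assume sub: "cball c s \<subseteq> C"
  show "\<forall>u. norm u = 1 \<longrightarrow> u \<bullet> c + s \<le> support_function C u"
  proof (intro allI impI)
    fix u :: 'a assume u: "norm u = 1"
    have "c + s *\<^sub>R u \<in> C"
      using sub u assms(4) by (auto simp: dist_norm)
    then have "u \<bullet> (c + s *\<^sub>R u) \<le> support_function C u"
      by (rule support_function_upper[OF assms(1)])
    then show "u \<bullet> c + s \<le> support_function C u"
      using u by (simp add: inner_add_right norm_eq_1)
  qed
next
  assume H: "\<forall>u. norm u = 1 \<longrightarrow> u \<bullet> c + s \<le> support_function C u"
  show "cball c s \<subseteq> C"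
  proof
    fix z assume z: "z \<in> cball c s"
    show "z \<in> C"
    proof (rule ccontr)
      assume "z \<notin> C"
      then obtain a b where ab: "a \<bullet> z < b" "\<forall>y\<in>C. b < a \<bullet> y"
        using separating_hyperplane_closed_point[OF assms(2) compact_imp_closed[OF assms(1)]] by blast
      have "a \<noteq> 0"
        using ab assms(3) by auto
      define v where "v = - (a /\<^sub>R norm a)"
      have v: "norm v = 1"
        using \<open>a \<noteq> 0\<close> by (simp add: v_def)
      have "support_function C v \<le> - b / norm a"
        using ab(2) \<open>a \<noteq> 0\<close> by (intro support_function_least[OF assms(3)]) (auto simp: v_def field_simps)
      also have "- b / norm a < v \<bullet> z"
        using ab(1) \<open>a \<noteq> 0\<close> by (simp add: v_def field_simps)
      also have "v \<bullet> z = v \<bullet> c + v \<bullet> (z - c)"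
        by (simp add: inner_diff_right)
      also have "v \<bullet> (z - c) \<le> s"
        using norm_cauchy_schwarz[of v "z - c"] v z by (simp add: dist_norm norm_minus_commute)
      finally show False
        using H v by force
    qed
  qed
qed

definition largest_inscribed_ball :: "'a::euclidean_space set \<Rightarrow> 'a \<Rightarrow> real \<Rightarrow> bool" where
  "largest_inscribed_ball C c r \<longleftrightarrow> 0 \<le> r \<and> cball c r \<subseteq> C \<and> (\<forall>c' s. cball c' s \<subseteq> C \<longrightarrow> s \<le> r)"

lemma inradius_eq_if_largest_inscribed_ball:
  assumes "largest_inscribed_ball C c r"
  shows "inradius C = r"
  unfolding inradius_def using assms
  by (intro cSup_eq_maximum) (auto simp: largest_inscribed_ball_def)

lemma largest_inscribed_ball_exists:
  fixes C :: "'a::euclidean_space set"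
  assumes "convex_body C"
  obtains c r where "largest_inscribed_ball C c r"
proof -
  have C: "compact C" "convex C" "interior C \<noteq> {}"
    using assms by (auto simp: convex_body_def)
  then have "C \<noteq> {}"
    using interior_subset by blast
  define K where "K = {p :: 'a \<times> real. 0 \<le> snd p \<and> cball (fst p) (snd p) \<subseteq> C}"
  have "K = {p. 0 \<le> snd p} \<inter> (\<Inter>u\<in>sphere 0 1. {p. u \<bullet> fst p + snd p \<le> support_function C u})"
  proof (intro set_eqI)
    fix p :: "'a \<times> real"
    show "p \<in> K \<longleftrightarrow> p \<in> {p. 0 \<le> snd p} \<inter> (\<Inter>u\<in>sphere 0 1. {p. u \<bullet> fst p + snd p \<le> support_function C u})"
      using cball_subset_iff_support_function[OF C(1,2) \<open>C \<noteq> {}\<close>, of "snd p" "fst p"]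
      by (auto simp: K_def) (meson mem_cball subsetD)
  qed
  then have "closed K"
    by (simp only:) (intro closed_Int closed_INT ballI closed_Collect_le continuous_intros)
  obtain R where "\<And>y. y \<in> C \<Longrightarrow> norm y \<le> R"
    using compact_imp_bounded[OF C(1)] by (meson bounded_pos)
  then have R: "C \<subseteq> cball 0 R"
    by auto
  have "bounded K"
  proof (rule bounded_subset[OF bounded_Times[OF bounded_cball bounded_cball]], rule subsetI)
    fix p assume "p \<in> K"
    then have "0 \<le> snd p" "cball (fst p) (snd p) \<subseteq> cball 0 R"
      using R unfolding K_def by blast+
    then have "norm (fst p) + snd p \<le> R"
      by (simp add: cball_subset_cball_iff dist_norm norm_minus_commute)
    then have "norm (fst p) \<le> R" "snd p \<le> R"
      using \<open>0 \<le> snd p\<close> norm_ge_zero[of "fst p"] by linarith+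
    with \<open>0 \<le> snd p\<close> show "p \<in> cball 0 R \<times> cball 0 R"
      by (auto simp: mem_Times_iff)
  qed
  with \<open>closed K\<close> have "compact K"
    by (simp add: compact_eq_bounded_closed)
  obtain c0 where "c0 \<in> interior C"
    using C(3) by blast
  then obtain e where "e > 0" "cball c0 e \<subseteq> interior C"
    using open_contains_cball open_interior by blast
  then have "(c0, e) \<in> K"
    using interior_subset by (auto simp: K_def)
  then have "K \<noteq> {}"
    by blast
  then obtain p where p: "p \<in> K" "\<And>q. q \<in> K \<Longrightarrow> snd q \<le> snd p"
    using continuous_attains_sup[OF \<open>compact K\<close> _ continuous_on_snd[OF continuous_on_id]] by blast
  have "largest_inscribed_ball C (fst p) (snd p)"
    unfolding largest_inscribed_ball_def
  proof (intro conjI allI impI)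
    show "0 \<le> snd p" "cball (fst p) (snd p) \<subseteq> C"
      using p(1) by (auto simp: K_def)
    fix c' s assume "cball c' s \<subseteq> C"
    then show "s \<le> snd p"
      using p(2)[of "(c', s)"] \<open>0 \<le> snd p\<close> by (cases "0 \<le> s") (auto simp: K_def)
  qed
  then show thesis by (rule that)
qed

lemma compact_continuous_positive_lower_bound:
  fixes f :: "'a::topological_space \<Rightarrow> real"
  assumes "compact S" "continuous_on S f" "\<And>x. x \<in> S \<Longrightarrow> 0 < f x"
  shows "\<exists>m>0. \<forall>x\<in>S. m \<le> f x"
proof (cases "S = {}")
  case False
  then obtain x0 where "x0 \<in> S" "\<forall>x\<in>S. f x0 \<le> f x"
    using continuous_attains_inf[OF assms(1) False assms(2)] by blast
  with assms(3) show ?thesis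
    by blast
qed (auto intro: exI[of _ 1])

definition contact_directions :: "'a::euclidean_space set \<Rightarrow> 'a \<Rightarrow> real \<Rightarrow> 'a set" where
  "contact_directions C c r = {u. norm u = 1 \<and> u \<bullet> c + r = support_function C u}"

lemma zero_in_convex_hull_contact_directions:
  fixes C :: "'a::euclidean_space set"
  assumes C: "compact C" "convex C" and ball: "largest_inscribed_ball C c r"
  shows "0 \<in> convex hull contact_directions C c r"
proof (rule ccontr)
  define U where "U = contact_directions C c r"
  assume "0 \<notin> convex hull contact_directions C c r"
  then have "0 \<notin> convex hull U"
    by (simp add: U_def)
  have r: "0 \<le> r" "cball c r \<subseteq> C" and largest: "\<And>c' s. cball c' s \<subseteq> C \<Longrightarrow> s \<le> r"
    using ball by (auto simp: largest_inscribed_ball_def)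
  then have "C \<noteq> {}"
    by auto
  note cball_iff = cball_subset_iff_support_function[OF C \<open>C \<noteq> {}\<close>]
  have h: "continuous_on UNIV (support_function C)"
    by (rule continuous_on_support_function[OF C(1) \<open>C \<noteq> {}\<close>])
  have slack: "u \<bullet> c + r \<le> support_function C u" if "norm u = 1" for u
    using cball_iff[OF r(1)] r(2) that by blast
  have "closed U"
    unfolding U_def contact_directions_def
    by (intro closed_Collect_conj closed_Collect_eq continuous_intros continuous_on_subset[OF h]) auto
  then have "compact (convex hull U)"
    by (intro compact_convex_hull)
       (auto simp: compact_eq_bounded_closed U_def contact_directions_def intro: bounded_subset[OF bounded_cball[of 0 1]])
  then obtain v \<beta> where v: "v \<noteq> 0" "0 < \<beta>" "\<And>u. u \<in> U \<Longrightarrow> \<beta> < v \<bullet> u"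
    using separating_hyperplane_closed_0[OF convex_convex_hull compact_imp_closed \<open>0 \<notin> convex hull U\<close>]
    by (meson hull_inc)
  define V where "V = {u. norm u = 1 \<and> v \<bullet> u \<le> \<beta> / 2}"
  have V_compact: "compact V"
    unfolding V_def compact_eq_bounded_closed
    by (auto intro!: closed_Collect_conj closed_Collect_eq closed_Collect_le continuous_intros
        intro: bounded_subset[OF bounded_cball[of 0 1]])
  have slack_continuous: "continuous_on V (\<lambda>u. support_function C u - u \<bullet> c - r)"
    by (intro continuous_intros continuous_on_subset[OF h]) auto
  have slack_pos: "0 < support_function C u - u \<bullet> c - r" if "u \<in> V" for u
  proof -
    have "u \<notin> U"
      using that v(2) v(3)[of u] by (auto simp: V_def)
    with slack[of u] that show ?thesis
      by (auto simp: U_def V_def contact_directions_def)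
  qed
  obtain m where m: "0 < m" "\<And>u. u \<in> V \<Longrightarrow> m \<le> support_function C u - u \<bullet> c - r"
    using compact_continuous_positive_lower_bound[OF V_compact slack_continuous slack_pos] by auto
  define \<epsilon> where "\<epsilon> = m / (2 * norm v)"
  define \<delta> where "\<delta> = min (m / 2) (\<epsilon> * \<beta> / 2)"
  have "0 < \<epsilon>" "0 < \<delta>"
    using m v by (auto simp: \<epsilon>_def \<delta>_def)
  \<comment> \<open>Shifting the centre by \<open>-\<epsilon> v\<close> changes the slack in direction \<open>u\<close> by \<open>\<epsilon> (v \<bullet> u)\<close>: a gain of
     at least \<open>\<epsilon> \<beta> / 2\<close> outside \<open>V\<close>, a loss of at most \<open>m / 2\<close> on \<open>V\<close>, where the slack is at least \<open>m\<close>.\<close>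
  have "u \<bullet> (c - \<epsilon> *\<^sub>R v) + (r + \<delta>) \<le> support_function C u" if u: "norm u = 1" for u
  proof -
    have shift: "u \<bullet> (c - \<epsilon> *\<^sub>R v) = u \<bullet> c - \<epsilon> * (v \<bullet> u)"
      by (simp add: inner_diff_right inner_commute)
    show ?thesis
    proof (cases "v \<bullet> u \<le> \<beta> / 2")
      case True
      have "- (v \<bullet> u) \<le> norm v"
        using norm_cauchy_schwarz[of "-v" u] u by simp
      then have "- (\<epsilon> * (v \<bullet> u)) \<le> m / 2"
        using \<open>0 < \<epsilon>\<close> v(1) mult_left_mono[of "- (v \<bullet> u)" "norm v" \<epsilon>] by (simp add: \<epsilon>_def)
      moreover have "m \<le> support_function C u - u \<bullet> c - r"
        using m(2) u True by (simp add: V_def)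
      moreover have "\<delta> \<le> m / 2"
        by (simp add: \<delta>_def)
      ultimately show ?thesis
        unfolding shift by linarith
    next
      case False
      then have "\<epsilon> * \<beta> / 2 \<le> \<epsilon> * (v \<bullet> u)"
        using \<open>0 < \<epsilon>\<close> by (simp add: field_simps)
      moreover have "\<delta> \<le> \<epsilon> * \<beta> / 2"
        by (simp add: \<delta>_def)
      ultimately show ?thesis
        using slack[OF u] unfolding shift by linarith
    qed
  qed
  then have "cball (c - \<epsilon> *\<^sub>R v) (r + \<delta>) \<subseteq> C"
    using cball_iff[of "r + \<delta>"] r(1) \<open>0 < \<delta>\<close> by auto
  then show False
    using largest \<open>0 < \<delta>\<close> by fastforce
qed

lemma convex_combination_zero_inner_lower_bound:
  fixes T :: "'a::real_inner set"
  assumes T: "finite T" and l: "\<And>t. t \<in> T \<Longrightarrow> 0 \<le> l t" "sum l T = 1" "(\<Sum>t\<in>T. l t *\<^sub>R t) = 0"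
    and t0: "t0 \<in> T" "\<And>t. t \<in> T \<Longrightarrow> l t \<le> l t0"
    and upper: "\<And>t. t \<in> T \<Longrightarrow> t \<bullet> z \<le> r" and "0 \<le> r"
  shows "- (real (card T) - 1) * r \<le> t0 \<bullet> z"
proof -
  have card: "1 \<le> real (card T) * l t0"
    using sum_bounded_above[of T l "l t0"] t0(2) l(2) by simp
  have "0 < l t0"
  proof (rule ccontr)
    assume "\<not> 0 < l t0"
    then have "real (card T) * l t0 \<le> 0"
      by (simp add: mult_nonneg_nonpos)
    with card show False
      by linarith
  qed
  have "(1 - l t0) * r \<le> ((real (card T) - 1) * l t0) * r"
    using card \<open>0 \<le> r\<close> by (intro mult_right_mono) (simp_all add: algebra_simps)
  have "0 = (\<Sum>t\<in>T. l t *\<^sub>R t) \<bullet> z"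
    using l(3) by simp
  also have "\<dots> = (\<Sum>t\<in>T. l t * (t \<bullet> z))"
    by (simp add: inner_sum_left)
  also have "\<dots> = l t0 * (t0 \<bullet> z) + (\<Sum>t\<in>T - {t0}. l t * (t \<bullet> z))"
    using T t0(1) by (simp add: sum.remove)
  also have "(\<Sum>t\<in>T - {t0}. l t * (t \<bullet> z)) \<le> (\<Sum>t\<in>T - {t0}. l t * r)"
    using l(1) upper by (intro sum_mono mult_left_mono) auto
  also have "\<dots> = (1 - l t0) * r"
    using T t0(1) l(2) by (simp add: sum_distrib_right[symmetric] sum_diff1)
  finally have "0 \<le> l t0 * (t0 \<bullet> z + (real (card T) - 1) * r)"
    using \<open>(1 - l t0) * r \<le> _\<close> by (simp add: algebra_simps)
  with \<open>0 < l t0\<close> have "0 \<le> t0 \<bullet> z + (real (card T) - 1) * r"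
    by (simp add: zero_le_mult_iff)
  then show ?thesis
    by (simp add: algebra_simps)
qed

lemma largest_inscribed_ball_slab:
  fixes C :: "'a::euclidean_space set"
  assumes C: "compact C" "convex C" and ball: "largest_inscribed_ball C c r"
  obtains u where "norm u = 1" "C \<subseteq> {y. u \<bullet> c - real DIM('a) * r \<le> u \<bullet> y \<and> u \<bullet> y \<le> u \<bullet> c + r}"
proof -
  obtain T where T: "finite T" "T \<subseteq> contact_directions C c r" "card T \<le> DIM('a) + 1" "0 \<in> convex hull T"
    using zero_in_convex_hull_contact_directions[OF C ball] unfolding caratheodory[of "contact_directions C c r"] by blast
  then obtain l where l: "\<And>t. t \<in> T \<Longrightarrow> 0 \<le> l t" "sum l T = 1" "(\<Sum>t\<in>T. l t *\<^sub>R t) = 0"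
    unfolding convex_hull_finite[OF T(1)] by blast
  then have "T \<noteq> {}"
    by auto
  have "Max (l ` T) \<in> l ` T"
    using T(1) \<open>T \<noteq> {}\<close> by (intro Max_in) auto
  then obtain t0 where t0: "t0 \<in> T" "l t0 = Max (l ` T)"
    by (metis imageE)
  have "0 \<le> r"
    using ball by (simp add: largest_inscribed_ball_def)
  show thesis
  proof
    show "norm t0 = 1"
      using t0(1) T(2) by (auto simp: contact_directions_def)
    have upper: "t \<bullet> (y - c) \<le> r" if "t \<in> T" "y \<in> C" for t y
      using support_function_upper[OF C(1) \<open>y \<in> C\<close>, of t] T(2) that(1)
      by (auto simp: inner_diff_right contact_directions_def)
    have "- real DIM('a) * r \<le> t0 \<bullet> (y - c)" if "y \<in> C" for y
    proof -
      have "- (real (card T) - 1) * r \<le> t0 \<bullet> (y - c)"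
        using T(1) t0 \<open>0 \<le> r\<close> upper[OF _ that]
        by (intro convex_combination_zero_inner_lower_bound[OF T(1) l]) auto
      moreover have "(real (card T) - 1) * r \<le> real DIM('a) * r"
        using T(3) \<open>0 \<le> r\<close> by (intro mult_right_mono) auto
      ultimately show ?thesis
        by linarith
    qed
    with upper[OF t0(1)] show "C \<subseteq> {y. t0 \<bullet> c - real DIM('a) * r \<le> t0 \<bullet> y \<and> t0 \<bullet> y \<le> t0 \<bullet> c + r}"
      by (force simp: inner_diff_right)
  qed
qed

theorem mainTheorem10:
  fixes C :: "'a::euclidean_space set" and x :: 'a and R :: real
  assumes "convex_body C" and "R > 0" and "C \<subseteq> cball x R"
  shows "measure lebesgue C \<le>
           real (DIM('a) + 1) * unit_ball_vol (real (DIM('a) - 1)) * R ^ (DIM('a) - 1) * inradius C"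
proof -
  have C: "compact C" "convex C"
    using assms(1) by (auto simp: convex_body_def)
  obtain c r where ball: "largest_inscribed_ball C c r"
    using largest_inscribed_ball_exists[OF assms(1)] .
  then have "0 \<le> r" "0 \<le> real DIM('a) * r"
    by (simp_all add: largest_inscribed_ball_def)
  obtain u where u: "norm u = 1" and slab: "C \<subseteq> {y. u \<bullet> c - real DIM('a) * r \<le> u \<bullet> y \<and> u \<bullet> y \<le> u \<bullet> c + r}"
    using largest_inscribed_ball_slab[OF C ball] .
  let ?S = "{y. u \<bullet> c - real DIM('a) * r \<le> u \<bullet> y \<and> u \<bullet> y \<le> u \<bullet> c + r} \<inter> cball x R"
  have "compact ?S"
    by (intro closed_Int_compact closed_Collect_conj closed_Collect_le continuous_intros compact_cball)
  then have "measure lebesgue C \<le> measure lebesgue ?S"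
    using slab assms(3) C(1) by (intro measure_mono_fmeasurable fmeasurableD lmeasurable_compact) auto
  also have "\<dots> \<le> ((u \<bullet> c + r) - (u \<bullet> c - real DIM('a) * r)) * unit_ball_vol (real (DIM('a) - 1)) * R ^ (DIM('a) - 1)"
    using \<open>0 \<le> r\<close> \<open>0 \<le> real DIM('a) * r\<close> by (intro measure_slab_cball_le u assms(2)) linarith
  also have "\<dots> = real (DIM('a) + 1) * unit_ball_vol (real (DIM('a) - 1)) * R ^ (DIM('a) - 1) * inradius C"
    by (simp add: inradius_eq_if_largest_inscribed_ball[OF ball] algebra_simps)
  finally show ?thesis .
qed

end
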